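(* Let $G$ be a simple graph with at least one edge on $n=pq$ vertices labelled $u_iw_j$ ($i\in\{1,\dots,p\}$, $j\in\{1,\dots,q\}$). If the density matrix $\rho(G)$ is separable in $\mathbb{C}^p_A\otimes\mathbb{C}^q_B$, then $\Delta(G)=\Delta(G^{\Gamma_B})$.
   Context: For a simple graph $G=(V,E)$ on vertices $v_1,\dots,v_n$: $M(G)$ is the adjacency matrix, $\Delta(G)$ the diagonal degree matrix ($(i,i)$ entry = degree of $v_i$), $L(G)=\Delta(G)-M(G)$ the Laplacian, and the density matrix of $G$ is $\rho(G)=\frac{1}{2|E|}L(G)$ (defined when $|E|\ge1$). When $n=pq$, the vertices are labelled as ordered pairs $u_iw_j$ ($1\le i\le p$, $1\le j\le q$), and vertex $u_iw_j$ is identified with the basis vector $|u_i\rangle\otimes|w_j\rangle$, where $\{|u_i\rangle\}$ and $\{|w_j\rangle\}$ are orthonormal bases of $\mathbb{C}^p_A$ and $\mathbb{C}^q_B$; matrices indexed by vertices are thus operators on $\mathbb{C}^p_A\otimes\mathbb{C}^q_B$. The partial transpose of $G$ is the graph $G^{\Gamma_B}=(V,E')$ with $\{u_iw_j,u_kw_l\}\in E'$ iff $\{u_iw_l,u_kw_j\}\in E$. A density matrix on $\mathbb{C}^p_A\otimes\mathbb{C}^q_B$ is separable if it is a convex combination of product states $|a\rangle\langle a|\otimes|b\rangle\langle b|$. *)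

theory Defs
  imports Complex_Main
begin

text \<open>Vertices u_i w_j are pairs (i,j) with 0 \<le> i < p, 0 \<le> j < q (0-based labels).
  The vertex (i,j) corresponds to the basis vector |u_i> \<otimes> |w_j>.\<close>

type_synonym vtx = "nat \<times> nat"

definition verts :: "nat \<Rightarrow> nat \<Rightarrow> vtx set" where
  "verts p q = {0..<p} \<times> {0..<q}"

definition simple_graph :: "nat \<Rightarrow> nat \<Rightarrow> (vtx \<Rightarrow> vtx \<Rightarrow> bool) \<Rightarrow> bool" where
  "simple_graph p q E \<longleftrightarrow>
     (\<forall>v w. E v w \<longrightarrow> v \<in> verts p q \<and> w \<in> verts p q) \<and>
     (\<forall>v w. E v w \<longrightarrow> E w v) \<and> (\<forall>v. \<not> E v v)"

definition edges :: "(vtx \<Rightarrow> vtx \<Rightarrow> bool) \<Rightarrow> vtx set set" where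
  "edges E = {{v, w} | v w. E v w}"

definition degree :: "nat \<Rightarrow> nat \<Rightarrow> (vtx \<Rightarrow> vtx \<Rightarrow> bool) \<Rightarrow> vtx \<Rightarrow> nat" where
  "degree p q E v = card {w \<in> verts p q. E v w}"

definition degree_matrix :: "nat \<Rightarrow> nat \<Rightarrow> (vtx \<Rightarrow> vtx \<Rightarrow> bool) \<Rightarrow> vtx \<Rightarrow> vtx \<Rightarrow> complex" where
  "degree_matrix p q E v w = (if v = w then of_nat (degree p q E v) else 0)"

definition adj_matrix :: "(vtx \<Rightarrow> vtx \<Rightarrow> bool) \<Rightarrow> vtx \<Rightarrow> vtx \<Rightarrow> complex" where
  "adj_matrix E v w = (if E v w then 1 else 0)"

definition laplacian :: "nat \<Rightarrow> nat \<Rightarrow> (vtx \<Rightarrow> vtx \<Rightarrow> bool) \<Rightarrow> vtx \<Rightarrow> vtx \<Rightarrow> complex" where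
  "laplacian p q E v w = degree_matrix p q E v w - adj_matrix E v w"

definition density :: "nat \<Rightarrow> nat \<Rightarrow> (vtx \<Rightarrow> vtx \<Rightarrow> bool) \<Rightarrow> vtx \<Rightarrow> vtx \<Rightarrow> complex" where
  "density p q E v w = laplacian p q E v w / of_nat (2 * card (edges E))"

definition partial_transpose_B :: "(vtx \<Rightarrow> vtx \<Rightarrow> bool) \<Rightarrow> vtx \<Rightarrow> vtx \<Rightarrow> bool" where
  "partial_transpose_B E v w = E (fst v, snd w) (fst w, snd v)"

text \<open>Product state |a><a| \<otimes> |b><b| with entries indexed by vertex pairs.\<close>
definition product_state :: "(nat \<Rightarrow> complex) \<Rightarrow> (nat \<Rightarrow> complex) \<Rightarrow> vtx \<Rightarrow> vtx \<Rightarrow> complex" where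
  "product_state a b v w = a (fst v) * cnj (a (fst w)) * b (snd v) * cnj (b (snd w))"

definition unit_vec :: "nat \<Rightarrow> (nat \<Rightarrow> complex) \<Rightarrow> bool" where
  "unit_vec d a \<longleftrightarrow> (\<Sum>i<d. (cmod (a i))\<^sup>2) = 1"

definition separable :: "nat \<Rightarrow> nat \<Rightarrow> (vtx \<Rightarrow> vtx \<Rightarrow> complex) \<Rightarrow> bool" where
  "separable p q \<rho> \<longleftrightarrow>
    (\<exists>(m::nat) (c::nat \<Rightarrow> real) (a::nat \<Rightarrow> nat \<Rightarrow> complex) (b::nat \<Rightarrow> nat \<Rightarrow> complex).
       (\<forall>k<m. c k \<ge> 0 \<and> unit_vec p (a k) \<and> unit_vec q (b k)) \<and>
       (\<Sum>k<m. c k) = 1 \<and>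
       (\<forall>v\<in>verts p q. \<forall>w\<in>verts p q.
          \<rho> v w = (\<Sum>k<m. of_real (c k) * product_state (a k) (b k) v w)))"

end

theory Submission
  imports Defs
begin

text \<open>The all-ones vector 1 = 1_A \<otimes> 1_B lies in the kernel of every Laplacian, so
  <1|\<rho>|1> = 0. For a separable \<rho> = \<Sum>_k c_k |a_k><a_k| \<otimes> |b_k><b_k| this number is
  \<Sum>_k c_k |<1_A|a_k> <1_B|b_k>|^2, so every term with c_k > 0 has <1_A|a_k> = 0 or
  <1_B|b_k> = 0. Hence the partial transpose \<rho>^\<Gamma> = \<Sum>_k c_k |a_k><a_k| \<otimes> |b_k*><b_k*|
  annihilates 1 as well. On the other hand, partial transposition fixes the diagonal of L(G)
  and turns M(G) into M(G^\<Gamma>), so the row sums of \<rho>^\<Gamma> are (d_G(v) - d_G^\<Gamma>(v)) / 2|E|.\<close>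

definition mat_partial_transpose_B :: "(vtx \<Rightarrow> vtx \<Rightarrow> 'a) \<Rightarrow> vtx \<Rightarrow> vtx \<Rightarrow> 'a" where
  "mat_partial_transpose_B M v w = M (fst v, snd w) (fst w, snd v)"

lemma sum_verts_product:
  "(\<Sum>v\<in>verts p q. g (fst v) * h (snd v)) = (\<Sum>i<p. g i) * (\<Sum>j<q. h j :: 'a :: comm_semiring_0)"
  by (simp add: verts_def sum.cartesian_product' sum_product atLeast0LessThan)

lemma row_sum_laplacian:
  assumes "v \<in> verts p q"
  shows "(\<Sum>w\<in>verts p q. laplacian p q E v w) = 0"
proof -
  have "(\<Sum>w\<in>verts p q. degree_matrix p q E v w) = of_nat (degree p q E v)"
    using assms by (simp add: degree_matrix_def verts_def)
  moreover have "(\<Sum>w\<in>verts p q. adj_matrix E v w) = of_nat (degree p q E v)"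
    by (simp add: adj_matrix_def degree_def verts_def sum.If_cases Int_def)
  ultimately show ?thesis
    by (simp add: laplacian_def sum_subtractf)
qed

lemma row_sum_partial_transpose_laplacian:
  assumes "v \<in> verts p q"
  shows "(\<Sum>w\<in>verts p q. mat_partial_transpose_B (laplacian p q E) v w)
           = of_nat (degree p q E v) - of_nat (degree p q (partial_transpose_B E) v)"
proof -
  have diag: "((fst v, snd w) = (fst w, snd v)) = (w = v)" for w
    by (cases v; cases w) auto
  have "(\<Sum>w\<in>verts p q. degree_matrix p q E (fst v, snd w) (fst w, snd v))
          = of_nat (degree p q E v)"
    using assms unfolding degree_matrix_def diag by (simp add: verts_def)
  moreover have "(\<Sum>w\<in>verts p q. adj_matrix E (fst v, snd w) (fst w, snd v))
          = of_nat (degree p q (partial_transpose_B E) v)"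
    by (simp add: adj_matrix_def degree_def partial_transpose_B_def verts_def sum.If_cases Int_def)
  ultimately show ?thesis
    by (simp add: mat_partial_transpose_B_def laplacian_def sum_subtractf)
qed

lemma total_sum_product_state:
  "(\<Sum>v\<in>verts p q. \<Sum>w\<in>verts p q. product_state a b v w)
     = of_real ((cmod ((\<Sum>i<p. a i) * (\<Sum>j<q. b j)))\<^sup>2)"
proof -
  have "(\<Sum>v\<in>verts p q. \<Sum>w\<in>verts p q. product_state a b v w)
      = (\<Sum>v\<in>verts p q. a (fst v) * b (snd v)) * (\<Sum>w\<in>verts p q. cnj (a (fst w)) * cnj (b (snd w)))"
    by (simp add: product_state_def sum_product mult_ac)
  also have "\<dots> = ((\<Sum>i<p. a i) * (\<Sum>j<q. b j)) * cnj ((\<Sum>i<p. a i) * (\<Sum>j<q. b j))"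
    using sum_verts_product[of "\<lambda>i. cnj (a i)" "\<lambda>j. cnj (b j)"]
    by (simp add: sum_verts_product cnj_sum)
  finally show ?thesis
    by (simp only: complex_norm_square)
qed

lemma row_sum_partial_transpose_product_state:
  "(\<Sum>w\<in>verts p q. mat_partial_transpose_B (product_state a b) v w)
     = a (fst v) * cnj (b (snd v)) * (cnj (\<Sum>i<p. a i) * (\<Sum>j<q. b j))"
proof -
  have "(\<Sum>w\<in>verts p q. mat_partial_transpose_B (product_state a b) v w)
      = a (fst v) * cnj (b (snd v)) * (\<Sum>w\<in>verts p q. cnj (a (fst w)) * b (snd w))"
    by (simp add: mat_partial_transpose_B_def product_state_def sum_distrib_left mult_ac)
  then show ?thesis
    using sum_verts_product[of "\<lambda>i. cnj (a i)" b] by (simp add: cnj_sum)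
qed

lemma separable_partial_transpose_row_sum_eq_0:
  assumes "separable p q \<rho>"
    and total: "(\<Sum>v\<in>verts p q. \<Sum>w\<in>verts p q. \<rho> v w) = 0"
    and v: "v \<in> verts p q"
  shows "(\<Sum>w\<in>verts p q. mat_partial_transpose_B \<rho> v w) = 0"
proof -
  let ?V = "verts p q"
  obtain m and c :: "nat \<Rightarrow> real" and a b where c_nonneg: "\<And>k. k < m \<Longrightarrow> c k \<ge> 0"
    and \<rho>: "\<And>v w. v \<in> ?V \<Longrightarrow> w \<in> ?V \<Longrightarrow>
                \<rho> v w = (\<Sum>k<m. of_real (c k) * product_state (a k) (b k) v w)"
    using assms(1) unfolding separable_def by blast
  define \<alpha> where "\<alpha> k = (\<Sum>i<p. a k i)" for k
  define \<beta> where "\<beta> k = (\<Sum>j<q. b k j)" for k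
  have "(\<Sum>v\<in>?V. \<Sum>w\<in>?V. \<rho> v w)
      = (\<Sum>k<m. of_real (c k) * (\<Sum>v\<in>?V. \<Sum>w\<in>?V. product_state (a k) (b k) v w))"
    by (simp add: \<rho> sum_distrib_left sum.swap[where A = "{..<m}"] cong: sum.cong)
  also have "\<dots> = of_real (\<Sum>k<m. c k * (cmod (\<alpha> k * \<beta> k))\<^sup>2)"
    by (simp add: total_sum_product_state \<alpha>_def \<beta>_def)
  finally have "(\<Sum>k<m. c k * (cmod (\<alpha> k * \<beta> k))\<^sup>2) = 0"
    using total by (metis of_real_eq_0_iff)
  then have vanish: "c k = 0 \<or> \<alpha> k = 0 \<or> \<beta> k = 0" if "k < m" for k
    using that c_nonneg by (subst (asm) sum_nonneg_eq_0_iff) auto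
  have swap_mem: "(fst v, snd w) \<in> ?V" "(fst w, snd v) \<in> ?V" if "w \<in> ?V" for w
    using v that by (auto simp: verts_def)
  have "(\<Sum>w\<in>?V. mat_partial_transpose_B \<rho> v w)
      = (\<Sum>k<m. of_real (c k) * (\<Sum>w\<in>?V. mat_partial_transpose_B (product_state (a k) (b k)) v w))"
    by (simp add: mat_partial_transpose_B_def \<rho> swap_mem sum_distrib_left
        sum.swap[where A = "{..<m}"] cong: sum.cong)
  also have "\<dots> = (\<Sum>k<m. of_real (c k) * (a k (fst v) * cnj (b k (snd v)) * (cnj (\<alpha> k) * \<beta> k)))"
    by (simp add: row_sum_partial_transpose_product_state \<alpha>_def \<beta>_def)
  also have "\<dots> = 0"
    using vanish by (intro sum.neutral) auto
  finally show ?thesis .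
qed

theorem theorem2:
  fixes p q :: nat and E :: "vtx \<Rightarrow> vtx \<Rightarrow> bool"
  assumes "simple_graph p q E"
    and "card (edges E) \<ge> 1"
    and "separable p q (density p q E)"
  shows "\<forall>v\<in>verts p q. \<forall>w\<in>verts p q.
           degree_matrix p q E v w = degree_matrix p q (partial_transpose_B E) v w"
proof (intro ballI)
  fix v w assume v: "v \<in> verts p q"
  have "(\<Sum>v\<in>verts p q. \<Sum>w\<in>verts p q. density p q E v w) = 0"
    by (simp add: density_def row_sum_laplacian flip: sum_divide_distrib)
  with assms(3) v have "(\<Sum>w\<in>verts p q. mat_partial_transpose_B (density p q E) v w) = 0"
    by (intro separable_partial_transpose_row_sum_eq_0)
  then have "(of_nat (degree p q E v) - of_nat (degree p q (partial_transpose_B E) v))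
               / of_nat (2 * card (edges E)) = (0 :: complex)"
    by (simp add: mat_partial_transpose_B_def density_def
        row_sum_partial_transpose_laplacian[OF v, unfolded mat_partial_transpose_B_def]
        flip: sum_divide_distrib)
  with assms(2) have "degree p q E v = degree p q (partial_transpose_B E) v"
    by simp
  then show "degree_matrix p q E v w = degree_matrix p q (partial_transpose_B E) v w"
    by (auto simp add: degree_matrix_def)
qed

end
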